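(* Let $\Omega$ be a set and let $G\le\mathrm{Sym}(\Omega)$ be $k$-by-block-transitive on $\Omega$ relative to the equivalence relation $\sim$, for some $k\ge 2$. Then for each $\omega\in\Omega$, the block stabilizer $G([\omega])$ is the largest proper subgroup of $G$ containing $G(\omega)$ (every proper subgroup of $G$ containing $G(\omega)$ is contained in $G([\omega])$). Equivalently, $\sim$ is the coarsest nonuniversal $G$-invariant equivalence relation on $\Omega$.
   Context: Blocks are $\sim$-classes; $[\omega]$ is the block of $\omega$, $G([\omega])$ its setwise stabilizer, $G(\omega)$ the stabilizer of $\omega$. $\Omega^{[k]}$ is the set of $k$-tuples no two entries of which lie in the same block. $G$ is $k$-by-block-transitive if $\sim$ is $G$-invariant, there are at least $k$ blocks, and $G$ is transitive on $\Omega^{[k]}$. *)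

theory Defs
  imports "HOL-Algebra.Bij"
begin

text \<open>Permutation groups on \<Omega> are subgroups of BijGroup \<Omega>.
  The equivalence relation \<sim> is a relation r with equiv \<Omega> r.\<close>

definition block :: "('a \<times> 'a) set \<Rightarrow> 'a \<Rightarrow> 'a set" where
  "block r \<omega> = r `` {\<omega>}"

definition point_stab :: "('a \<Rightarrow> 'a) set \<Rightarrow> 'a \<Rightarrow> ('a \<Rightarrow> 'a) set" where
  "point_stab G \<omega> = {g \<in> G. g \<omega> = \<omega>}"

definition block_stab :: "('a \<Rightarrow> 'a) set \<Rightarrow> ('a \<times> 'a) set \<Rightarrow> 'a \<Rightarrow> ('a \<Rightarrow> 'a) set" where
  "block_stab G r \<omega> = {g \<in> G. g ` block r \<omega> = block r \<omega>}"

definition G_invariant :: "('a \<Rightarrow> 'a) set \<Rightarrow> ('a \<times> 'a) set \<Rightarrow> bool" where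
  "G_invariant G r \<longleftrightarrow> (\<forall>g\<in>G. \<forall>x y. (x, y) \<in> r \<longrightarrow> (g x, g y) \<in> r)"

definition by_block_tuples :: "'a set \<Rightarrow> ('a \<times> 'a) set \<Rightarrow> nat \<Rightarrow> 'a list set" where
  "by_block_tuples \<Omega> r k = {xs. length xs = k \<and> set xs \<subseteq> \<Omega> \<and>
      (\<forall>i<k. \<forall>j<k. i \<noteq> j \<longrightarrow> (xs ! i, xs ! j) \<notin> r)}"

definition k_by_block_transitive ::
  "'a set \<Rightarrow> ('a \<times> 'a) set \<Rightarrow> ('a \<Rightarrow> 'a) set \<Rightarrow> nat \<Rightarrow> bool" where
  "k_by_block_transitive \<Omega> r G k \<longleftrightarrow>
     G_invariant G r \<and>
     (\<exists>B. B \<subseteq> \<Omega> // r \<and> finite B \<and> card B = k) \<and>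
     (\<forall>xs\<in>by_block_tuples \<Omega> r k. \<forall>ys\<in>by_block_tuples \<Omega> r k. \<exists>g\<in>G. map g xs = ys)"

end

(* Since k >= 2, the group is in particular 2-by-block-transitive: it is transitive on ordered
   pairs of points lying in distinct blocks, so G(\<omega>) is transitive on \<Omega> - [\<omega>].
   Let G(\<omega>) <= H <= G with some h in H moving \<omega> out of [\<omega>]. For g moving \<omega> out of [\<omega>]
   pick a in G(\<omega>) with a (g \<omega>) = h \<omega>; then h^-1 a g fixes \<omega>, so g lies in H. Every other g
   of G maps \<omega> into [\<omega>], hence h g moves \<omega> out of [\<omega>] and g = h^-1 (h g) lies in H too.
   Similarly, a G-invariant equivalence relating two points of distinct blocks relates all such
   pairs, and then, as each point has a partner in another block, all pairs whatsoever. *)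

theory Submission
  imports Defs
begin

lemma (in group) subgroup_mem_cancel_left:
  assumes "subgroup H G" "h \<in> H" "x \<in> carrier G" "h \<otimes> x \<in> H"
  shows "x \<in> H"
proof -
  have "inv h \<otimes> (h \<otimes> x) \<in> H"
    using assms by (simp add: subgroup.m_closed subgroup.m_inv_closed)
  then show ?thesis
    using assms by (simp add: m_assoc[symmetric] subgroup.mem_carrier)
qed

lemma BijGroup_mult_apply:
  "g \<in> Bij S \<Longrightarrow> h \<in> Bij S \<Longrightarrow> x \<in> S \<Longrightarrow> (g \<otimes>\<^bsub>BijGroup S\<^esub> h) x = g (h x)"
  by (simp add: BijGroup_def compose_def)

lemma BijGroup_inv_apply:
  "g \<in> Bij S \<Longrightarrow> x \<in> S \<Longrightarrow> (inv\<^bsub>BijGroup S\<^esub> g) (g x) = x"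
  using Bij_imp_funcset[of g S] by (auto simp: inv_BijGroup Bij_def bij_betw_def)

lemma subgroup_BijGroup_imp_Bij:
  "subgroup G (BijGroup \<Omega>) \<Longrightarrow> g \<in> G \<Longrightarrow> g \<in> Bij \<Omega>"
  using subgroup.subset by (fastforce simp: BijGroup_def)

lemma subgroup_setwise_stabilizer:
  assumes G: "subgroup G (BijGroup \<Omega>)" and "B \<subseteq> \<Omega>"
  shows "subgroup {g \<in> G. g ` B = B} (BijGroup \<Omega>)"
proof (rule group.subgroupI[OF group_BijGroup])
  show "{g \<in> G. g ` B = B} \<subseteq> carrier (BijGroup \<Omega>)"
    using subgroup.subset[OF G] by blast
  have "\<one>\<^bsub>BijGroup \<Omega>\<^esub> ` B = B"
    using assms(2) by (auto simp: BijGroup_def)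
  then show "{g \<in> G. g ` B = B} \<noteq> {}"
    using subgroup.one_closed[OF G] by blast
next
  fix g assume g: "g \<in> {g \<in> G. g ` B = B}"
  then have "(inv\<^bsub>BijGroup \<Omega>\<^esub> g) ` B = (inv\<^bsub>BijGroup \<Omega>\<^esub> g) ` g ` B"
    by simp
  also have "\<dots> = B"
  proof -
    have "g \<in> Bij \<Omega>"
      using g subgroup_BijGroup_imp_Bij[OF G] by blast
    then show ?thesis
      using assms(2) by (simp add: image_image BijGroup_inv_apply subset_iff cong: image_cong)
  qed
  finally show "inv\<^bsub>BijGroup \<Omega>\<^esub> g \<in> {g \<in> G. g ` B = B}"
    using g subgroup.m_inv_closed[OF G] by blast
next
  fix g h assume g: "g \<in> {g \<in> G. g ` B = B}" and h: "h \<in> {g \<in> G. g ` B = B}"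
  then have "g \<in> Bij \<Omega>" "h \<in> Bij \<Omega>"
    using subgroup_BijGroup_imp_Bij[OF G] by auto
  then have "(g \<otimes>\<^bsub>BijGroup \<Omega>\<^esub> h) ` B = g ` h ` B"
    using assms(2) by (simp add: image_image BijGroup_mult_apply subset_iff cong: image_cong)
  then show "g \<otimes>\<^bsub>BijGroup \<Omega>\<^esub> h \<in> {g \<in> G. g ` B = B}"
    using g h subgroup.m_closed[OF G] by auto
qed

lemma by_block_tuples_iff_distinct_blocks:
  assumes "equiv \<Omega> r"
  shows "xs \<in> by_block_tuples \<Omega> r k \<longleftrightarrow>
    length xs = k \<and> set xs \<subseteq> \<Omega> \<and> distinct (map (block r) xs)"
proof -
  have "(xs ! i, xs ! j) \<in> r \<longleftrightarrow> block r (xs ! i) = block r (xs ! j)"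
    if "set xs \<subseteq> \<Omega>" "i < length xs" "j < length xs" for i j
    using that eq_equiv_class_iff[OF assms] by (simp add: block_def subset_iff)
  then show ?thesis
    unfolding by_block_tuples_def by (auto simp: distinct_conv_nth)
qed

lemma pair_in_by_block_tuples_iff:
  assumes "equiv \<Omega> r"
  shows "[a, b] \<in> by_block_tuples \<Omega> r 2 \<longleftrightarrow> a \<in> \<Omega> \<and> b \<in> \<Omega> \<and> (a, b) \<notin> r"
proof -
  have "block r a = block r b \<longleftrightarrow> (a, b) \<in> r" if "a \<in> \<Omega>" "b \<in> \<Omega>"
    using that eq_equiv_class_iff[OF assms] by (simp add: block_def)
  then show ?thesis
    by (auto simp: by_block_tuples_iff_distinct_blocks[OF assms])
qed

lemma by_block_tuples_extend:
  assumes "equiv \<Omega> r" "B \<subseteq> \<Omega> // r" "finite B" "card B = k"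
    and "xs \<in> by_block_tuples \<Omega> r j" "j \<le> k"
  shows "\<exists>ys. xs @ ys \<in> by_block_tuples \<Omega> r k"
proof -
  have xs: "length xs = j" "set xs \<subseteq> \<Omega>" "distinct (map (block r) xs)"
    using assms(5) by (simp_all add: by_block_tuples_iff_distinct_blocks[OF assms(1)])
  let ?used = "block r ` set xs"
  have "card ?used = j"
    using xs distinct_card[of "map (block r) xs"] by simp
  then have "k - j \<le> card (B - ?used)"
    using diff_card_le_card_Diff[of ?used B] assms(3,4) by simp
  then obtain C where C: "C \<subseteq> B - ?used" "card C = k - j"
    by (meson obtain_subset_with_card_n)
  have "C \<subseteq> block r ` \<Omega>"
    using C assms(2) by (auto simp: quotient_def block_def)
  then obtain R where R: "R \<subseteq> \<Omega>" "inj_on (block r) R" "C = block r ` R"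
    by (auto simp: subset_image_inj)
  have "finite R"
    using R C assms(3) finite_subset[of C B] by (auto simp: finite_image_iff[symmetric])
  then obtain ys where ys: "set ys = R" "distinct ys"
    using finite_distinct_list by blast
  have "length ys = k - j"
    using ys R C by (metis card_image distinct_card)
  moreover have "distinct (map (block r) ys)"
    using ys R by (simp add: distinct_map)
  ultimately have "xs @ ys \<in> by_block_tuples \<Omega> r k"
    using xs ys R C assms(6)
    by (auto simp: by_block_tuples_iff_distinct_blocks[OF assms(1)])
  then show ?thesis ..
qed

lemma k_by_block_transitive_mono:
  assumes "equiv \<Omega> r" "k_by_block_transitive \<Omega> r G k" "j \<le> k"
  shows "k_by_block_transitive \<Omega> r G j"
proof -
  obtain B where B: "B \<subseteq> \<Omega> // r" "finite B" "card B = k"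
    using assms(2) by (auto simp: k_by_block_transitive_def)
  obtain B' where "B' \<subseteq> B" "card B' = j"
    using B assms(3) by (meson obtain_subset_with_card_n)
  then have "B' \<subseteq> \<Omega> // r \<and> finite B' \<and> card B' = j"
    using B finite_subset by blast
  moreover have "\<exists>g\<in>G. map g xs = ys"
    if xs: "xs \<in> by_block_tuples \<Omega> r j" and ys: "ys \<in> by_block_tuples \<Omega> r j" for xs ys
  proof -
    obtain xs' ys' where "xs @ xs' \<in> by_block_tuples \<Omega> r k" "ys @ ys' \<in> by_block_tuples \<Omega> r k"
      using by_block_tuples_extend[OF assms(1) B _ assms(3)] xs ys by metis
    then obtain g where "g \<in> G" "map g (xs @ xs') = ys @ ys'"
      using assms(2) unfolding k_by_block_transitive_def by blast
    moreover have "length xs = length ys"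
      using xs ys by (simp add: by_block_tuples_def)
    ultimately show ?thesis
      by auto
  qed
  ultimately show ?thesis
    using assms(2) by (auto simp: k_by_block_transitive_def)
qed

lemma two_by_block_transitiveD:
  assumes "equiv \<Omega> r" "k_by_block_transitive \<Omega> r G 2"
    and "a \<in> \<Omega>" "b \<in> \<Omega>" "(a, b) \<notin> r" "x \<in> \<Omega>" "y \<in> \<Omega>" "(x, y) \<notin> r"
  shows "\<exists>g\<in>G. g a = x \<and> g b = y"
proof -
  have "[a, b] \<in> by_block_tuples \<Omega> r 2" "[x, y] \<in> by_block_tuples \<Omega> r 2"
    using assms by (simp_all add: pair_in_by_block_tuples_iff)
  then obtain g where "g \<in> G" "map g [a, b] = [x, y]"
    using assms(2) unfolding k_by_block_transitive_def by blast
  then show ?thesis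
    by auto
qed

lemma two_by_block_transitive_unrelated_pair:
  assumes "equiv \<Omega> r" "k_by_block_transitive \<Omega> r G 2"
  obtains a b where "a \<in> \<Omega>" "b \<in> \<Omega>" "(a, b) \<notin> r"
proof -
  obtain B where "B \<subseteq> \<Omega> // r" "card B = 2"
    using assms(2) by (auto simp: k_by_block_transitive_def)
  then obtain X Y where "X \<in> \<Omega> // r" "Y \<in> \<Omega> // r" "X \<noteq> Y"
    by (metis card_2_iff insert_subset)
  then obtain a b where "a \<in> \<Omega>" "b \<in> \<Omega>" "r `` {a} \<noteq> r `` {b}"
    by (auto elim!: quotientE)
  then show ?thesis
    using that eq_equiv_class_iff[OF assms(1)] by blast
qed

lemma equiv_exists_unrelated:
  assumes "equiv \<Omega> r" "a \<in> \<Omega>" "b \<in> \<Omega>" "(a, b) \<notin> r" "x \<in> \<Omega>"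
  shows "\<exists>z\<in>\<Omega>. (x, z) \<notin> r"
proof (rule ccontr)
  assume "\<not> ?thesis"
  then have "(x, a) \<in> r" "(x, b) \<in> r"
    using assms by auto
  then have "(a, b) \<in> r"
    using assms(1) unfolding equiv_def by (blast dest: symD transD)
  with assms(4) show False ..
qed

lemma G_invariant_equiv_subset:
  assumes r: "equiv \<Omega> r" and s: "equiv \<Omega> s" "G_invariant G s" "s \<noteq> \<Omega> \<times> \<Omega>"
    and pair_transitive: "\<And>a b x y. a \<in> \<Omega> \<Longrightarrow> b \<in> \<Omega> \<Longrightarrow> (a, b) \<notin> r \<Longrightarrow>
        x \<in> \<Omega> \<Longrightarrow> y \<in> \<Omega> \<Longrightarrow> (x, y) \<notin> r \<Longrightarrow> \<exists>g\<in>G. g a = x \<and> g b = y"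
    and unrelated: "\<And>x. x \<in> \<Omega> \<Longrightarrow> \<exists>z\<in>\<Omega>. (x, z) \<notin> r"
  shows "s \<subseteq> r"
proof (rule ccontr)
  assume "\<not> s \<subseteq> r"
  then obtain a b where ab: "(a, b) \<in> s" "(a, b) \<notin> r"
    by auto
  then have "a \<in> \<Omega>" "b \<in> \<Omega>"
    using equiv_type[OF s(1)] by auto
  have s_of_unrelated: "(x, y) \<in> s" if xy: "x \<in> \<Omega>" "y \<in> \<Omega>" "(x, y) \<notin> r" for x y
  proof -
    obtain g where "g \<in> G" "g a = x" "g b = y"
      using pair_transitive[OF \<open>a \<in> \<Omega>\<close> \<open>b \<in> \<Omega>\<close> ab(2) xy] by blast
    then show ?thesis
      using s(2) ab(1) unfolding G_invariant_def by blast
  qed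
  have "(x, y) \<in> s" if "x \<in> \<Omega>" "y \<in> \<Omega>" for x y
  proof (cases "(x, y) \<in> r")
    case True
    obtain z where z: "z \<in> \<Omega>" "(x, z) \<notin> r"
      using unrelated[OF \<open>x \<in> \<Omega>\<close>] by blast
    then have "(z, y) \<notin> r"
      using True r unfolding equiv_def by (blast dest: symD transD)
    then have "(x, z) \<in> s" "(z, y) \<in> s"
      using s_of_unrelated that z by auto
    then show ?thesis
      using s(1) unfolding equiv_def by (blast dest: transD)
  qed (use s_of_unrelated that in blast)
  then have "s = \<Omega> \<times> \<Omega>"
    using equiv_type[OF s(1)] by auto
  with s(3) show False ..
qed

lemma two_by_block_transitive_point_stab:
  assumes "equiv \<Omega> r" "k_by_block_transitive \<Omega> r G 2" "\<omega> \<in> \<Omega>"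
    and "x \<in> \<Omega> - block r \<omega>" "y \<in> \<Omega> - block r \<omega>"
  shows "\<exists>a\<in>point_stab G \<omega>. a x = y"
  using two_by_block_transitiveD[OF assms(1,2,3), of x \<omega> y] assms(3-5)
  by (auto simp: point_stab_def block_def)

lemma two_by_block_transitive_moves_block:
  assumes "equiv \<Omega> r" "k_by_block_transitive \<Omega> r G 2" "\<omega> \<in> \<Omega>"
  shows "\<exists>g\<in>G. (\<omega>, g \<omega>) \<notin> r"
proof -
  obtain a b where "a \<in> \<Omega>" "b \<in> \<Omega>" "(a, b) \<notin> r"
    using two_by_block_transitive_unrelated_pair[OF assms(1,2)] .
  then obtain z where z: "z \<in> \<Omega>" "(\<omega>, z) \<notin> r"
    using equiv_exists_unrelated[OF assms(1) _ _ _ assms(3)] by blast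
  then have "(z, \<omega>) \<notin> r"
    using assms(1) unfolding equiv_def by (blast dest: symD)
  then obtain g where "g \<in> G" "g \<omega> = z"
    using two_by_block_transitiveD[OF assms(1,2,3) z(1,2) z(1) assms(3)] by blast
  with z(2) show ?thesis
    by blast
qed

locale invariant_block_system =
  fixes \<Omega> :: "'a set" and r :: "('a \<times> 'a) set" and G :: "('a \<Rightarrow> 'a) set"
  assumes perm_group: "subgroup G (BijGroup \<Omega>)"
    and equiv: "equiv \<Omega> r"
    and invariant: "G_invariant G r"
begin

lemma mem_Bij: "g \<in> G \<Longrightarrow> g \<in> Bij \<Omega>"
  by (rule subgroup_BijGroup_imp_Bij[OF perm_group])

lemma apply_closed: "g \<in> G \<Longrightarrow> x \<in> \<Omega> \<Longrightarrow> g x \<in> \<Omega>"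
  using Bij_imp_funcset[OF mem_Bij] by blast

lemma cancel_in_subgroup:
  "subgroup H (BijGroup \<Omega>) \<Longrightarrow> h \<in> H \<Longrightarrow> g \<in> G \<Longrightarrow> h \<otimes>\<^bsub>BijGroup \<Omega>\<^esub> g \<in> H \<Longrightarrow> g \<in> H"
  using group.subgroup_mem_cancel_left[OF group_BijGroup] subgroup.mem_carrier[OF perm_group]
  by blast

lemma block_image:
  assumes "g \<in> G" "\<omega> \<in> \<Omega>"
  shows "g ` block r \<omega> = block r (g \<omega>)"
proof
  show "g ` block r \<omega> \<subseteq> block r (g \<omega>)"
    using invariant assms(1) by (auto simp: G_invariant_def block_def)
next
  show "block r (g \<omega>) \<subseteq> g ` block r \<omega>"
  proof
    fix y assume y: "y \<in> block r (g \<omega>)"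
    have "g ` \<Omega> = \<Omega>"
      using mem_Bij[OF assms(1)] by (simp add: Bij_def bij_betw_def)
    moreover have "y \<in> \<Omega>"
      using y equiv_type[OF equiv] by (auto simp: block_def)
    ultimately obtain z where z: "z \<in> \<Omega>" "y = g z"
      by blast
    have "((inv\<^bsub>BijGroup \<Omega>\<^esub> g) (g \<omega>), (inv\<^bsub>BijGroup \<Omega>\<^esub> g) (g z)) \<in> r"
      using y z invariant subgroup.m_inv_closed[OF perm_group assms(1)]
      by (auto simp: G_invariant_def block_def)
    then have "z \<in> block r \<omega>"
      using mem_Bij[OF assms(1)] assms(2) z(1) by (simp add: BijGroup_inv_apply block_def)
    then show "y \<in> g ` block r \<omega>"
      using z(2) by blast
  qed
qed

lemma block_stab_iff:
  assumes "g \<in> G" "\<omega> \<in> \<Omega>"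
  shows "g \<in> block_stab G r \<omega> \<longleftrightarrow> (\<omega>, g \<omega>) \<in> r"
proof -
  have "g \<omega> \<in> \<Omega>"
    using apply_closed assms by blast
  have "g \<in> block_stab G r \<omega> \<longleftrightarrow> block r \<omega> = block r (g \<omega>)"
    using assms by (auto simp: block_stab_def block_image)
  also have "\<dots> \<longleftrightarrow> (\<omega>, g \<omega>) \<in> r"
    using eq_equiv_class_iff[OF equiv assms(2) \<open>g \<omega> \<in> \<Omega>\<close>] by (simp add: block_def)
  finally show ?thesis .
qed

lemma subgroup_block_stab: "\<omega> \<in> \<Omega> \<Longrightarrow> subgroup (block_stab G r \<omega>) (BijGroup \<Omega>)"
  unfolding block_stab_def
  by (rule subgroup_setwise_stabilizer[OF perm_group])
    (use equiv_type[OF equiv] in \<open>auto simp: block_def\<close>)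

lemma point_stab_subset_block_stab: "\<omega> \<in> \<Omega> \<Longrightarrow> point_stab G \<omega> \<subseteq> block_stab G r \<omega>"
  using block_stab_iff equiv by (auto simp: point_stab_def equiv_def refl_on_def)

lemma block_stab_psubset:
  assumes "\<omega> \<in> \<Omega>" "g \<in> G" "(\<omega>, g \<omega>) \<notin> r"
  shows "block_stab G r \<omega> \<subset> G"
  using block_stab_iff[OF assms(2,1)] assms(2,3) unfolding block_stab_def by blast

lemma mem_subgroup_if_moves_block:
  assumes "\<omega> \<in> \<Omega>"
    and transitive_outside: "\<And>x y. x \<in> \<Omega> - block r \<omega> \<Longrightarrow> y \<in> \<Omega> - block r \<omega> \<Longrightarrow>
        \<exists>a\<in>point_stab G \<omega>. a x = y"
    and H: "subgroup H (BijGroup \<Omega>)" "point_stab G \<omega> \<subseteq> H" "H \<subseteq> G"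
    and h: "h \<in> H" "(\<omega>, h \<omega>) \<notin> r"
    and g: "g \<in> G" "(\<omega>, g \<omega>) \<notin> r"
  shows "g \<in> H"
proof -
  let ?inv = "m_inv (BijGroup \<Omega>)" and ?mult = "mult (BijGroup \<Omega>)"
  have "h \<in> G"
    using h(1) H(3) by blast
  have "h \<omega> \<in> \<Omega> - block r \<omega>" "g \<omega> \<in> \<Omega> - block r \<omega>"
    using h g \<open>h \<in> G\<close> apply_closed assms(1) by (auto simp: block_def)
  then obtain a where a: "a \<in> point_stab G \<omega>" "a (g \<omega>) = h \<omega>"
    using transitive_outside by blast
  then have "a \<in> G" "a \<in> H"
    using H(2) by (auto simp: point_stab_def)
  have ag: "?mult a g \<in> G" and "?inv h \<in> G"
    using \<open>a \<in> G\<close> g(1) \<open>h \<in> G\<close> subgroup.m_closed[OF perm_group] subgroup.m_inv_closed[OF perm_group]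
    by blast+
  have "?mult (?inv h) (?mult a g) \<omega> = \<omega>"
    using a(2) g(1) assms(1) \<open>a \<in> G\<close> \<open>h \<in> G\<close> \<open>?inv h \<in> G\<close> ag apply_closed
    by (simp add: BijGroup_mult_apply BijGroup_inv_apply mem_Bij)
  then have "?mult (?inv h) (?mult a g) \<in> H"
    using H(2) \<open>?inv h \<in> G\<close> ag subgroup.m_closed[OF perm_group]
    by (auto simp: point_stab_def)
  then have "?mult a g \<in> H"
    by (rule cancel_in_subgroup[OF H(1) subgroup.m_inv_closed[OF H(1) h(1)] ag])
  then show "g \<in> H"
    by (rule cancel_in_subgroup[OF H(1) \<open>a \<in> H\<close> g(1)])
qed

lemma block_stab_maximal:
  assumes "\<omega> \<in> \<Omega>"
    and transitive_outside: "\<And>x y. x \<in> \<Omega> - block r \<omega> \<Longrightarrow> y \<in> \<Omega> - block r \<omega> \<Longrightarrow>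
        \<exists>a\<in>point_stab G \<omega>. a x = y"
    and H: "subgroup H (BijGroup \<Omega>)" "point_stab G \<omega> \<subseteq> H" "H \<subseteq> G"
    and "\<not> H \<subseteq> block_stab G r \<omega>"
  shows "G \<subseteq> H"
proof
  obtain h where h: "h \<in> H" "(\<omega>, h \<omega>) \<notin> r"
    using assms(6) H(3) block_stab_iff[OF _ assms(1)] by blast
  note moves = mem_subgroup_if_moves_block[OF assms(1) transitive_outside H h]
  fix g assume g: "g \<in> G"
  show "g \<in> H"
  proof (cases "(\<omega>, g \<omega>) \<in> r")
    case True
    have "h \<in> G"
      using h(1) H(3) by blast
    then have "(h \<omega>, h (g \<omega>)) \<in> r"
      using True invariant by (auto simp: G_invariant_def)
    then have "(\<omega>, h (g \<omega>)) \<notin> r"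
      using h(2) equiv unfolding equiv_def by (blast dest: symD transD)
    then have "h \<otimes>\<^bsub>BijGroup \<Omega>\<^esub> g \<in> H"
      using moves \<open>h \<in> G\<close> g assms(1) subgroup.m_closed[OF perm_group]
      by (simp add: BijGroup_mult_apply mem_Bij)
    then show ?thesis
      by (rule cancel_in_subgroup[OF H(1) h(1) g])
  qed (use moves g in blast)
qed
end

theorem lemma2p3:
  fixes \<Omega> :: "'a set" and r :: "('a \<times> 'a) set" and G :: "('a \<Rightarrow> 'a) set" and k :: nat
  assumes "subgroup G (BijGroup \<Omega>)"
    and "equiv \<Omega> r"
    and "k \<ge> 2"
    and "k_by_block_transitive \<Omega> r G k"
  shows "(\<forall>\<omega>\<in>\<Omega>.
            subgroup (block_stab G r \<omega>) (BijGroup \<Omega>) \<and>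
            point_stab G \<omega> \<subseteq> block_stab G r \<omega> \<and>
            block_stab G r \<omega> \<subset> G \<and>
            (\<forall>H. subgroup H (BijGroup \<Omega>) \<and> point_stab G \<omega> \<subseteq> H \<and> H \<subset> G
                 \<longrightarrow> H \<subseteq> block_stab G r \<omega>))
       \<and> (r \<noteq> \<Omega> \<times> \<Omega> \<and>
          (\<forall>s. equiv \<Omega> s \<and> G_invariant G s \<and> s \<noteq> \<Omega> \<times> \<Omega> \<longrightarrow> s \<subseteq> r))"
proof -
  interpret invariant_block_system \<Omega> r G
    using assms by (intro invariant_block_system.intro) (simp_all add: k_by_block_transitive_def)
  have two: "k_by_block_transitive \<Omega> r G 2"
    by (rule k_by_block_transitive_mono[OF assms(2,4,3)])
  obtain a b where ab: "a \<in> \<Omega>" "b \<in> \<Omega>" "(a, b) \<notin> r"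
    using two_by_block_transitive_unrelated_pair[OF equiv two] .
  have psubset: "block_stab G r \<omega> \<subset> G" if "\<omega> \<in> \<Omega>" for \<omega>
    using two_by_block_transitive_moves_block[OF equiv two that] block_stab_psubset[OF that] by blast
  have maximal: "H \<subseteq> block_stab G r \<omega>"
    if \<omega>: "\<omega> \<in> \<Omega>" and H: "subgroup H (BijGroup \<Omega>)" "point_stab G \<omega> \<subseteq> H" "H \<subset> G" for \<omega> H
    using block_stab_maximal[OF \<omega> two_by_block_transitive_point_stab[OF equiv two \<omega>] H(1,2)] H(3)
    by blast
  have coarsest: "s \<subseteq> r" if "equiv \<Omega> s" "G_invariant G s" "s \<noteq> \<Omega> \<times> \<Omega>" for s
    using G_invariant_equiv_subset[OF equiv that two_by_block_transitiveD[OF equiv two]]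
      equiv_exists_unrelated[OF equiv ab] by blast
  have "r \<noteq> \<Omega> \<times> \<Omega>"
    using ab by blast
  then show ?thesis
    using subgroup_block_stab point_stab_subset_block_stab psubset maximal coarsest
    by simp
qed

end
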